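(* Let $F\in\mathcal L_n$ be real with $\|F\|_{\mathsf E}\le1$, $F\not\equiv 0$, and let $D^0=(F)_0+D_n^\infty-(F)_\infty$ be its generalized zero divisor. Then every alternation set of $F$ has at most $n+1-D^0(x_* )$ points.
   Context: Let $\mathsf E\subset\overline{\mathbb R}$ be compact, proper, with infinitely many points. Cyclic order: $(t_0,\dots,t_m)$, $m\ge2$, is cyclically ordered if it has no repetitions and some $f\in\mathrm{PSL}(2,\mathbb R)$ has $f(t_0)=\infty$, $f(t_1)<\dots<f(t_m)$; $(a,b)=\{c:(a,c,b)\text{ cyclically ordered}\}$, $[a,b)=(a,b)\cup\{a\}$. Divisors are finitely supported $D:\overline{\mathbb C}\to\mathbb Z$; for rational $f$, $(f)_\infty$, $(f)_0$ are the polar and zero divisors (both $0$ if $f$ is constant); $\mathcal L(D)=\{f\text{ rational}:(f)_\infty\le D\}$. Fix $n\ge1$, an integral divisor $D_n^\infty\ge0$ of degree $n$ supported in $\overline{\mathbb R}\setminus\mathsf E$, $x_*\in\overline{\mathbb R}\setminus\mathsf E$, $\mathcal L_n=\mathcal L(D_n^\infty)$, $\|F\|_{\mathsf E}=\sup_{\mathsf E}|F|$. Real means $F(\bar z)=\overline{F(z)}$. Sign function: $S_n(x)=\sum_{\mathbf c\ne x_*}D_n^\infty(\mathbf c)\chi_{[x_*,\mathbf c)}(x)$. An alternation set of $F$ is a set of distinct points $x_1,\dots,x_m\in\mathsf E$ with $(x_*,x_1,\dots,x_m)$ cyclically ordered and $F(x_j)=(-1)^{m-j-S_n(x_j)}$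 for all $j$. *)

theory Defs
  imports "HOL-Analysis.Analysis" "HOL-Computational_Algebra.Polynomial" "HOL-Computational_Algebra.Fraction_Field"
begin

text \<open>The extended real line is modelled as real option (None is the point at infinity),
  the Riemann sphere as complex option (None is infinity).\<close>

type_synonym ereal_pt = "real option"
type_synonym sphere_pt = "complex option"

definition emb :: "real option \<Rightarrow> complex option" where
  "emb x = map_option complex_of_real x"

text \<open>Compactness in the one-point compactification of the real line.\<close>
definition compact_ext :: "real option set \<Rightarrow> bool" where
  "compact_ext E \<longleftrightarrow> closed {x. Some x \<in> E} \<and> (None \<notin> E \<longrightarrow> bounded {x. Some x \<in> E})"

definition moeb :: "real \<Rightarrow> real \<Rightarrow> real \<Rightarrow> real \<Rightarrow> real option \<Rightarrow> real option" where
  "moeb a b c d t = (case t of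
      None \<Rightarrow> (if c = 0 then None else Some (a / c))
    | Some x \<Rightarrow> (if c * x + d = 0 then None else Some ((a * x + b) / (c * x + d))))"

definition cyc_ordered :: "real option list \<Rightarrow> bool" where
  "cyc_ordered ts \<longleftrightarrow> distinct ts \<and> ts \<noteq> [] \<and>
     (\<exists>a b c d. a * d - b * c = 1 \<and> moeb a b c d (hd ts) = None \<and>
        (\<exists>ys. map (moeb a b c d) (tl ts) = map Some ys \<and> sorted_wrt (<) ys))"

definition open_arc :: "real option \<Rightarrow> real option \<Rightarrow> real option set" where
  "open_arc a b = {c. cyc_ordered [a, c, b]}"

definition halfopen_arc :: "real option \<Rightarrow> real option \<Rightarrow> real option set" where
  "halfopen_arc a b = insert a (open_arc a b)"

type_synonym ratfun = "complex poly fract"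

text \<open>A reduced representation: F = p/q with q monic and p, q without common zero.
  Such a representation exists and is unique for every element of C(z).\<close>
definition rf_rep :: "ratfun \<Rightarrow> complex poly \<times> complex poly" where
  "rf_rep F = (SOME (p, q). q \<noteq> 0 \<and> lead_coeff q = 1 \<and> F = Fraction_Field.Fract p q \<and>
      (\<forall>w. \<not> (poly p w = 0 \<and> poly q w = 0)))"

definition num :: "ratfun \<Rightarrow> complex poly" where "num F = fst (rf_rep F)"
definition den :: "ratfun \<Rightarrow> complex poly" where "den F = snd (rf_rep F)"

definition rf_eval :: "ratfun \<Rightarrow> complex option \<Rightarrow> complex option" where
  "rf_eval F z = (case z of
      Some w \<Rightarrow> (if poly (den F) w = 0 then None else Some (poly (num F) w / poly (den F) w))
    | None \<Rightarrow> (if degree (num F) > degree (den F) then None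
              else if degree (num F) < degree (den F) then Some 0
              else Some (lead_coeff (num F) / lead_coeff (den F))))"

definition rf_real :: "ratfun \<Rightarrow> bool" where
  "rf_real F \<longleftrightarrow> (\<forall>w. rf_eval F (Some (cnj w)) = map_option cnj (rf_eval F (Some w)))"

definition rf_const :: "ratfun \<Rightarrow> bool" where
  "rf_const F \<longleftrightarrow> (\<exists>c. F = Fraction_Field.Fract [:c:] 1)"

definition rf_ord :: "ratfun \<Rightarrow> complex option \<Rightarrow> int" where
  "rf_ord F z = (case z of
      Some w \<Rightarrow> int (order w (num F)) - int (order w (den F))
    | None \<Rightarrow> int (degree (den F)) - int (degree (num F)))"

type_synonym divisor = "complex option \<Rightarrow> int"

definition zero_div :: "ratfun \<Rightarrow> divisor" where
  "zero_div F z = (if rf_const F then 0 else max 0 (rf_ord F z))"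

definition polar_div :: "ratfun \<Rightarrow> divisor" where
  "polar_div F z = (if rf_const F then 0 else max 0 (- rf_ord F z))"

definition Lspace :: "divisor \<Rightarrow> ratfun set" where
  "Lspace D = {F. \<forall>z. polar_div F z \<le> D z}"

definition deg_div :: "divisor \<Rightarrow> int" where
  "deg_div D = (\<Sum>z\<in>{z. D z \<noteq> 0}. D z)"

text \<open>S_n(x) = sum over c distinct from x_* of D(c) times the indicator of [x_*, c) at x.
  D is supported on the extended real line, so the sum ranges over real points.\<close>
definition sign_fun :: "divisor \<Rightarrow> real option \<Rightarrow> real option \<Rightarrow> int" where
  "sign_fun D xs x = (\<Sum>c\<in>{c. D (emb c) \<noteq> 0 \<and> c \<noteq> xs}.
       D (emb c) * (if x \<in> halfopen_arc xs c then 1 else 0))"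

definition alternation_set ::
  "real option set \<Rightarrow> divisor \<Rightarrow> real option \<Rightarrow> ratfun \<Rightarrow> real option list \<Rightarrow> bool" where
  "alternation_set E D xs F pts \<longleftrightarrow>
     distinct pts \<and> set pts \<subseteq> E \<and> cyc_ordered (xs # pts) \<and>
     (\<forall>j < length pts. rf_eval F (emb (pts ! j)) =
        Some (complex_of_real ((-1) powi (int (length pts) - int (j + 1) - sign_fun D xs (pts ! j)))))"

end

theory Submission
  imports Defs "HOL-Computational_Algebra.Polynomial_Factorial" "HOL-Computational_Algebra.Field_as_Ring"
    "HOL-Computational_Algebra.Fundamental_Theorem_Algebra"
begin

text \<open>Write F = P/Q with real coprime polynomials P, Q. Cut the extended real line at x_* and walk
  along it: the sign of F flips exactly at the points where F has odd order. Between two consecutive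
  points of an alternation set the prescribed values of F differ in sign by one more than the jump
  of the sign function S_n, and that jump is the mass of D_n^\<infinity> on the arc between them. Hence the
  order of F cannot equal -D_n^\<infinity> all along such an arc: the generalized zero divisor D^0, which is
  nonnegative because F lies in L_n, charges each of these disjoint arcs, none of which contains x_*.
  Principal divisors have degree zero, so deg D^0 = n, and m alternation points give
  m - 1 + D^0(x_*) \<le> n.\<close>

section \<open>Reduced representation of rational functions\<close>

definition reduced_fract :: "complex poly \<Rightarrow> complex poly \<Rightarrow> bool" where
  "reduced_fract p q \<longleftrightarrow> q \<noteq> 0 \<and> lead_coeff q = 1 \<and> (\<forall>w. \<not> (poly p w = 0 \<and> poly q w = 0))"

lemma reduced_fract_imp_coprime:
  assumes "reduced_fract p q" shows "coprime p q"
proof (rule ccontr)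
  assume "\<not> coprime p q"
  moreover have "gcd p q \<noteq> 0" using assms by (auto simp: reduced_fract_def)
  ultimately have "degree (gcd p q) \<noteq> 0" using is_unit_gcd is_unit_iff_degree by blast
  then obtain z where "poly (gcd p q) z = 0"
    by (metis fundamental_theorem_of_algebra constant_degree)
  hence "poly p z = 0" "poly q z = 0"
    by (meson dvd_trans gcd_dvd1 gcd_dvd2 poly_eq_0_iff_dvd)+
  thus False using assms by (auto simp: reduced_fract_def)
qed

lemma reduced_fract_exists: "\<exists>p q. reduced_fract p q \<and> F = Fract p q"
proof -
  obtain a b where F: "F = Fract a b" "b \<noteq> 0" by (cases F)
  define g where "g = gcd a b"
  have g0: "g \<noteq> 0" using F by (simp add: g_def)
  obtain a' where a': "a = a' * g" unfolding g_def by (metis dvd_div_mult_self gcd_dvd1)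
  obtain b' where b': "b = b' * g" unfolding g_def by (metis dvd_div_mult_self gcd_dvd2)
  have cop: "coprime a' b'" using gcd_coprime[OF _ a'[unfolded g_def] b'[unfolded g_def]] g0 g_def by simp
  have b'0: "b' \<noteq> 0" using F b' by auto
  define c where "c = lead_coeff b'"
  have c0: "c \<noteq> 0" using b'0 by (simp add: c_def)
  define p where "p = smult (1/c) a'"
  define q where "q = smult (1/c) b'"
  have "reduced_fract p q"
    unfolding reduced_fract_def
  proof (intro conjI allI)
    show "q \<noteq> 0" using b'0 c0 by (simp add: q_def)
    show "lead_coeff q = 1" using c0 by (simp add: q_def c_def lead_coeff_smult)
    fix w show "\<not> (poly p w = 0 \<and> poly q w = 0)"
    proof
      assume "poly p w = 0 \<and> poly q w = 0"
      hence "[:-w,1:] dvd a'" "[:-w,1:] dvd b'" using c0 by (auto simp: p_def q_def poly_eq_0_iff_dvd)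
      hence "is_unit [:-w,1:]" using cop coprime_common_divisor by blast
      thus False by (simp add: is_unit_iff_degree)
    qed
  qed
  moreover have "F = Fract p q"
    using F a' b' c0 b'0 g0 by (simp add: eq_fract p_def q_def mult_ac)
  ultimately show ?thesis by blast
qed

lemma reduced_fract_unique:
  assumes "reduced_fract p q" "reduced_fract p' q'" "Fract p q = Fract p' q'"
  shows "p = p' \<and> q = q'"
proof -
  have q0: "q \<noteq> 0" "q' \<noteq> 0" using assms by (auto simp: reduced_fract_def)
  have eq: "p * q' = p' * q" using assms(3) q0 by (simp add: eq_fract)
  have cop: "coprime q p" "coprime q' p'"
    using reduced_fract_imp_coprime assms(1,2) by (auto simp: coprime_commute)
  have "q dvd q'" using cop(1) by (metis coprime_dvd_mult_right_iff dvd_triv_right eq)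
  moreover have "q' dvd q" using cop(2) by (metis coprime_dvd_mult_right_iff dvd_triv_right eq)
  moreover have "normalize q = q" "normalize q' = q'"
    using assms by (auto simp: reduced_fract_def normalize_poly_def one_pCons[symmetric])
  ultimately have "q = q'" by (metis associated_iff_dvd)
  with eq q0 show ?thesis by simp
qed

lemma reduced_fract_num_den: "reduced_fract (num F) (den F)" and Fract_num_den: "Fract (num F) (den F) = F"
proof -
  obtain p q where pq: "reduced_fract p q" "F = Fract p q" using reduced_fract_exists by blast
  hence "case (p, q) of (p, q) \<Rightarrow> q \<noteq> 0 \<and> lead_coeff q = 1 \<and> F = Fract p q \<and>
      (\<forall>w. \<not> (poly p w = 0 \<and> poly q w = 0))"
    by (auto simp: reduced_fract_def)
  hence "case rf_rep F of (p, q) \<Rightarrow> q \<noteq> 0 \<and> lead_coeff q = 1 \<and> F = Fract p q \<and>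
      (\<forall>w. \<not> (poly p w = 0 \<and> poly q w = 0))"
    unfolding rf_rep_def by (rule someI)
  thus "reduced_fract (num F) (den F)" "Fract (num F) (den F) = F"
    by (auto simp: num_def den_def reduced_fract_def split: prod.splits)
qed

lemma num_den_eqI: "reduced_fract p q \<Longrightarrow> F = Fract p q \<Longrightarrow> num F = p \<and> den F = q"
  using reduced_fract_unique reduced_fract_num_den Fract_num_den by metis

lemma num_nonzero: "F \<noteq> 0 \<Longrightarrow> num F \<noteq> 0"
  using Fract_num_den[of F] by (auto simp: fract_collapse)

lemma den_nonzero: "den F \<noteq> 0" and lead_coeff_den: "lead_coeff (den F) = 1"
  and num_den_no_common_root: "poly (num F) w = 0 \<Longrightarrow> poly (den F) w \<noteq> 0"
  using reduced_fract_num_den[of F] by (auto simp: reduced_fract_def)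

text \<open>Reflecting the reduced representation in the real axis gives again a reduced representation
  of F; by uniqueness it coincides with the original one.\<close>
lemma rf_real_coeffs:
  assumes "rf_real F"
  shows "\<forall>i. coeff (num F) i \<in> \<real>" "\<forall>i. coeff (den F) i \<in> \<real>"
proof -
  define p q where "p = num F" and "q = den F"
  define p' q' where "p' = map_poly cnj p" and "q' = map_poly cnj q"
  have red: "reduced_fract p q" using reduced_fract_num_den p_def q_def by blast
  have q0: "q \<noteq> 0" using red by (simp add: reduced_fract_def)
  have cp': "coeff p' i = cnj (coeff p i)" and cq': "coeff q' i = cnj (coeff q i)" for i
    by (simp_all add: p'_def q'_def coeff_map_poly)
  have "degree q' = degree q" unfolding q'_def by (rule degree_map_poly) simp
  hence lq': "lead_coeff q' = 1" using red by (simp add: cq' reduced_fract_def)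
  hence q'0: "q' \<noteq> 0" by auto
  have red': "reduced_fract p' q'"
    using red lq' q'0 by (auto simp: reduced_fract_def p'_def q'_def)
  have "poly ((p * q' - p' * q) * (q * q')) w = 0" for w
  proof (cases "poly q w = 0 \<or> poly q' w = 0")
    case False
    have "rf_eval F (Some (cnj (cnj w))) = map_option cnj (rf_eval F (Some (cnj w)))"
      using assms unfolding rf_real_def by blast
    hence "poly p w / poly q w = poly p' w / poly q' w"
      using False by (simp add: rf_eval_def p_def [symmetric] q_def [symmetric] p'_def q'_def)
    thus ?thesis using False by (simp add: divide_eq_eq)
  qed auto
  hence "p * q' - p' * q = 0" using q0 q'0 by (metis poly_all_0_iff_0 mult_eq_0_iff)
  hence "Fract p' q' = Fract p q" using q0 q'0 by (simp add: eq_fract mult.commute)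
  hence "p' = p \<and> q' = q" using reduced_fract_unique[OF red' red] by blast
  hence "coeff p i = cnj (coeff p i)" "coeff q i = cnj (coeff q i)" for i using cp' cq' by auto
  thus "\<forall>i. coeff (num F) i \<in> \<real>" "\<forall>i. coeff (den F) i \<in> \<real>"
    by (auto simp: p_def q_def Reals_cnj_iff)
qed

section \<open>Signs of real polynomials\<close>

lemma sgn_poly_eventually_at_top:
  fixes P :: "real poly" assumes "P \<noteq> 0"
  obtains y where "\<And>z. z \<ge> y \<Longrightarrow> sgn (poly P z) = sgn (lead_coeff P)"
proof (cases "lead_coeff P > 0")
  case True
  then obtain y where "\<forall>z\<ge>y. poly P z \<ge> lead_coeff P" using poly_pinfty_gt_lc by blast
  with True show ?thesis by (intro that[of y]) auto
next
  case False
  hence "lead_coeff (-P) > 0" using assms by (simp add: lead_coeff_minus less_le)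
  then obtain y where "\<forall>z\<ge>y. poly (-P) z \<ge> lead_coeff (-P)" using poly_pinfty_gt_lc by blast
  with \<open>lead_coeff (-P) > 0\<close> show ?thesis by (intro that[of y]) (auto simp: lead_coeff_minus)
qed

lemma sgn_poly_eventually_at_bot:
  fixes P :: "real poly" assumes "P \<noteq> 0"
  obtains y where "\<And>z. z \<le> y \<Longrightarrow> sgn (poly P z) = sgn (lead_coeff P) * (-1) ^ degree P"
proof -
  define P' where "P' = pcompose P [:0, -1:]"
  have lc: "lead_coeff P' = lead_coeff P * (-1) ^ degree P"
    unfolding P'_def by (subst lead_coeff_comp) auto
  hence "P' \<noteq> 0" using assms by auto
  then obtain y where y: "\<And>z. z \<ge> y \<Longrightarrow> sgn (poly P' z) = sgn (lead_coeff P')"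
    using sgn_poly_eventually_at_top by blast
  have "poly P' (-z) = poly P z" for z by (simp add: P'_def poly_pcompose)
  with y[of "-z" for z] lc show ?thesis by (intro that[of "-y"]) (auto simp: sgn_mult)
qed

lemma sum_order_mult_linear:
  fixes P Q :: "'a :: idom poly"
  assumes "P = [:-r, 1:] * Q" "Q \<noteq> 0" "C r"
  shows "(\<Sum>s | poly P s = 0 \<and> C s. order s P) = Suc (\<Sum>s | poly Q s = 0 \<and> C s. order s Q)"
proof -
  have P0: "P \<noteq> 0" using assms(1,2) by (metis mult_eq_0_iff one_neq_zero pCons_eq_0_iff)
  let ?S = "{s. poly P s = 0 \<and> C s}"
  have fin: "finite ?S" using poly_roots_finite[OF P0] by simp
  have r: "r \<in> ?S" using assms by simp
  have ord: "order s P = (if s = r then 1 else 0) + order s Q" for s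
    using assms(1) P0 order_mult[of "[:-r,1:]" Q s] order_power_n_n[of r 1]
    by (auto simp del: mult_pCons_left simp: order_0I)
  have "(\<Sum>s\<in>?S. order s Q) = (\<Sum>s | poly Q s = 0 \<and> C s. order s Q)"
    by (rule sum.mono_neutral_right[OF fin]) (use assms in \<open>auto simp: order_root\<close>)
  thus ?thesis using fin r by (simp add: ord sum.distrib)
qed

lemma sgn_poly_eq_roots_above:
  fixes P :: "real poly"
  assumes "P \<noteq> 0" "poly P x \<noteq> 0"
  shows "sgn (poly P x) = sgn (lead_coeff P) * (-1) ^ (\<Sum>r | poly P r = 0 \<and> x < r. order r P)"
  using assms
proof (induction "degree P" arbitrary: P rule: less_induct)
  case (less P)
  show ?case
  proof (cases "\<exists>r. poly P r = 0 \<and> x < r")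
    case True
    then obtain r where r: "poly P r = 0" "x < r" by blast
    then obtain Q where PQ: "P = [:-r,1:] * Q" using poly_eq_0_iff_dvd by (metis dvdE)
    have Q0: "Q \<noteq> 0" using less.prems PQ by auto
    have "degree P = Suc (degree Q)"
      using PQ Q0 degree_mult_eq[of "[:-r,1:]" Q] by (simp del: mult_pCons_left)
    moreover have "poly Q x \<noteq> 0" using less.prems(2) PQ by simp
    ultimately have IH: "sgn (poly Q x) = sgn (lead_coeff Q) * (-1) ^ (\<Sum>r | poly Q r = 0 \<and> x < r. order r Q)"
      using less.hyps Q0 by simp
    have "lead_coeff P = lead_coeff Q"
      using PQ lead_coeff_mult[of "[:-r,1:]" Q] by (simp del: mult_pCons_left)
    moreover have "sgn (poly P x) = - sgn (poly Q x)"
      using PQ r by (simp del: mult_pCons_left add: sgn_mult)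
    ultimately show ?thesis using IH sum_order_mult_linear[OF PQ Q0, of "\<lambda>s. x < s"] r by simp
  next
    case False
    obtain y0 where y0: "\<And>z. z \<ge> y0 \<Longrightarrow> sgn (poly P z) = sgn (lead_coeff P)"
      using sgn_poly_eventually_at_top[OF less.prems(1)] by blast
    define y where "y = max y0 (x + 1)"
    have "sgn (poly P x) = sgn (poly P y)"
    proof (rule ccontr)
      assume "sgn (poly P x) \<noteq> sgn (poly P y)"
      hence "poly P x * poly P y < 0" using y0[of y] less.prems
        by (auto simp: y_def sgn_if mult_less_0_iff split: if_splits)
      moreover have "x < y" by (simp add: y_def)
      ultimately obtain z where "x < z" "poly P z = 0" using poly_IVT by blast
      thus False using False by blast
    qed
    moreover have "(\<Sum>r | poly P r = 0 \<and> x < r. order r P) = 0" using False by (intro sum.neutral) auto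
    ultimately show ?thesis using y0[of y] by (simp add: y_def)
  qed
qed

lemma even_sum_real_root_orders:
  fixes P :: "real poly"
  assumes "P \<noteq> 0"
  shows "even (\<Sum>r | poly P r = 0. order r P) \<longleftrightarrow> even (degree P)"
proof -
  let ?R = "{r. poly P r = 0}"
  have fin: "finite ?R" using poly_roots_finite[OF assms] .
  obtain y0 where y0: "\<And>z. z \<le> y0 \<Longrightarrow> sgn (poly P z) = sgn (lead_coeff P) * (-1) ^ degree P"
    using sgn_poly_eventually_at_bot[OF assms] by blast
  define y where "y = Min (insert y0 ?R) - 1"
  have below: "y < r" if "r \<in> ?R" for r
  proof -
    have "Min (insert y0 ?R) \<le> r" using fin that by (intro Min_le) auto
    thus ?thesis by (simp add: y_def)
  qed
  have "Min (insert y0 ?R) \<le> y0" using fin by (intro Min_le) auto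
  hence "y \<le> y0" by (simp add: y_def)
  hence "poly P y \<noteq> 0" and sgn_y: "sgn (poly P y) = sgn (lead_coeff P) * (-1) ^ degree P"
    using y0[of y] assms by (auto simp: sgn_0_0)
  moreover have "{r. poly P r = 0 \<and> y < r} = ?R" using below by auto
  ultimately have "sgn (lead_coeff P) * (-1) ^ degree P = sgn (lead_coeff P) * (-1) ^ (\<Sum>r\<in>?R. order r P)"
    using sgn_poly_eq_roots_above[OF assms] by metis
  thus ?thesis using assms by (simp add: minus_one_power_iff sgn_0_0 split: if_splits)
qed

abbreviation of_real_poly :: "real poly \<Rightarrow> complex poly" where
  "of_real_poly \<equiv> map_poly complex_of_real"

lemma of_real_poly_Re: "\<forall>i. coeff p i \<in> \<real> \<Longrightarrow> of_real_poly (map_poly Re p) = p"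
  by (rule poly_eqI) (simp add: coeff_map_poly)

lemma poly_of_real_poly: "poly (of_real_poly P) (of_real x) = of_real (poly P x)"
  by (induction P) (auto simp: map_poly_pCons)

lemma of_real_poly_mult: "of_real_poly (P * R) = of_real_poly P * of_real_poly R"
  by (rule poly_eqI) (simp add: coeff_map_poly coeff_mult)

lemma of_real_poly_power: "of_real_poly (P ^ n) = of_real_poly P ^ n"
  by (induction n) (simp_all add: of_real_poly_mult)

lemma of_real_poly_eq_0_iff [simp]: "of_real_poly P = 0 \<longleftrightarrow> P = 0"
  by (simp add: map_poly_eq_0_iff)

lemma degree_of_real_poly [simp]: "degree (of_real_poly P) = degree P"
  by (simp add: degree_map_poly)

lemma order_of_real_poly:
  assumes "P \<noteq> 0" shows "order (of_real r) (of_real_poly P) = order r P"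
proof -
  obtain S where S: "P = [:-r,1:] ^ order r P * S" "\<not> [:-r,1:] dvd S"
    using order_decomp[OF assms] by blast
  have "poly (of_real_poly S) (of_real r) \<noteq> 0"
    using S(2) by (simp add: poly_of_real_poly poly_eq_0_iff_dvd)
  moreover have "S \<noteq> 0" using S assms by auto
  moreover have "of_real_poly P = [:- of_real r, 1:] ^ order r P * of_real_poly S"
    by (subst S(1)) (simp del: mult_pCons_left add: of_real_poly_mult of_real_poly_power map_poly_pCons)
  ultimately show ?thesis using assms
    by (simp del: mult_pCons_left add: order_mult order_power_n_n order_0I)
qed

section \<open>The cyclic order\<close>

text \<open>An increasing coordinate for the cyclic order started at xs: the Moebius map
  t \<mapsto> -1/(t - xs) sending xs to infinity (the identity if xs is infinity).\<close>
definition cut_coord :: "real option \<Rightarrow> real option \<Rightarrow> real" where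
  "cut_coord xs t = (case (xs, t) of
      (_, None) \<Rightarrow> 0 | (None, Some x) \<Rightarrow> x | (Some c, Some x) \<Rightarrow> -1 / (x - c))"

lemma cut_coord_simps [simp]:
  "cut_coord xs None = 0" "cut_coord None (Some x) = x" "cut_coord (Some c) (Some x) = -1 / (x - c)"
  by (simp_all add: cut_coord_def split: option.split)

lemma cut_coord_inj: "s \<noteq> xs \<Longrightarrow> t \<noteq> xs \<Longrightarrow> cut_coord xs s = cut_coord xs t \<Longrightarrow> s = t"
  by (cases xs; cases s; cases t) (auto simp: frac_eq_eq)

lemma one_div_diff_less_iff:
  fixes x y c :: real
  assumes "x \<noteq> c" "y \<noteq> c"
  shows "1 / (y - c) < 1 / (x - c) \<longleftrightarrow> (if (c < x) = (c < y) then x < y else c < x)"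
  using assms by (auto simp: inverse_eq_divide [symmetric] inverse_less_iff zero_less_mult_iff mult_le_0_iff)

lemma moeb_eq_affine_cut_coord:
  assumes det: "a * d - b * c = 1" and inf: "moeb a b c d xs = None"
  obtains \<alpha> \<beta> where "\<alpha> > 0" "\<And>t. t \<noteq> xs \<Longrightarrow> moeb a b c d t = Some (\<alpha> * cut_coord xs t + \<beta>)"
proof (cases xs)
  case None
  hence "c = 0" using inf by (auto simp: moeb_def split: if_splits)
  hence ad: "a * d = 1" using det by simp
  hence d0: "d \<noteq> 0" by auto
  hence a: "a = 1 / d" using ad by (simp add: eq_divide_eq)
  have "a / d > 0" using d0 by (simp add: a power2_eq_square[symmetric])
  moreover have "moeb a b c d t = Some (a / d * cut_coord xs t + b / d)" if "t \<noteq> xs" for t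
    using that None \<open>c = 0\<close> d0 by (cases t) (auto simp: moeb_def add_divide_distrib)
  ultimately show ?thesis by (rule that)
next
  case (Some x0)
  hence cx: "c * x0 + d = 0" using inf by (auto simp: moeb_def split: if_splits)
  have c0: "c \<noteq> 0" using cx det by auto
  have dd: "d = - c * x0" using cx by simp
  have bb: "b = - a * x0 - 1 / c" using det c0 unfolding dd by (simp add: field_simps)
  have "moeb a b c d t = Some (1 / c^2 * cut_coord xs t + a / c)" if "t \<noteq> xs" for t
  proof (cases t)
    case None thus ?thesis using c0 Some by (simp add: moeb_def)
  next
    case (Some x)
    hence "x \<noteq> x0" using that \<open>xs = Some x0\<close> by auto
    moreover have "c * x + d \<noteq> 0" using c0 \<open>x \<noteq> x0\<close> by (simp add: dd algebra_simps)
    moreover have "(a * x + b) / (c * x + d) = 1 / c^2 * (-1 / (x - x0)) + a / c"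
      using c0 \<open>x \<noteq> x0\<close> unfolding bb dd by (simp add: field_simps power2_eq_square)
    ultimately show ?thesis using Some \<open>xs = Some x0\<close> by (simp add: moeb_def)
  qed
  moreover have "1 / c^2 > 0" using c0 by simp
  ultimately show ?thesis using that by blast
qed

lemma cyc_ordered_imp_sorted:
  assumes "cyc_ordered (xs # ts)"
  shows "distinct (xs # ts)" "sorted_wrt (\<lambda>s t. cut_coord xs s < cut_coord xs t) ts"
proof -
  obtain a b c d ys where det: "a * d - b * c = 1" and inf: "moeb a b c d xs = None"
    and ys: "map (moeb a b c d) ts = map Some ys" and so: "sorted_wrt (<) ys"
    using assms unfolding cyc_ordered_def by auto
  show dist: "distinct (xs # ts)" using assms unfolding cyc_ordered_def by simp
  obtain \<alpha> \<beta> where ab: "\<alpha> > 0" "\<And>t. t \<noteq> xs \<Longrightarrow> moeb a b c d t = Some (\<alpha> * cut_coord xs t + \<beta>)"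
    using moeb_eq_affine_cut_coord[OF det inf] by blast
  have "map (moeb a b c d) ts = map Some (map (\<lambda>t. \<alpha> * cut_coord xs t + \<beta>) ts)"
    using dist by (auto intro!: map_cong ab(2))
  hence "ys = map (\<lambda>t. \<alpha> * cut_coord xs t + \<beta>) ts" using ys by (metis list.inj_map_strong option.inject)
  hence "sorted_wrt (\<lambda>s t. \<alpha> * cut_coord xs s + \<beta> < \<alpha> * cut_coord xs t + \<beta>) ts"
    using so by (simp add: sorted_wrt_map)
  thus "sorted_wrt (\<lambda>s t. cut_coord xs s < cut_coord xs t) ts"
    by (rule sorted_wrt_mono_rel[rotated]) (use ab(1) in auto)
qed

lemma cyc_ordered_3_iff:
  assumes "distinct [xs, x, c]"
  shows "cyc_ordered [xs, x, c] \<longleftrightarrow> cut_coord xs x < cut_coord xs c"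
proof
  assume "cyc_ordered [xs, x, c]"
  thus "cut_coord xs x < cut_coord xs c" using cyc_ordered_imp_sorted(2)[of xs "[x, c]"] by simp
next
  assume lt: "cut_coord xs x < cut_coord xs c"
  show "cyc_ordered [xs, x, c]"
  proof (cases xs)
    case None
    then obtain x' c' where "x = Some x'" "c = Some c'" using assms by (cases x; cases c) auto
    thus ?thesis unfolding cyc_ordered_def using assms lt None
      by (intro conjI exI[of _ 1] exI[of _ 0] exI[of _ 0] exI[of _ 1] exI[of _ "[x', c']"])
        (auto simp: moeb_def)
  next
    case (Some x0)
    have "moeb 0 (-1) 1 (-x0) t = Some (cut_coord xs t)" if "t \<noteq> xs" for t
      using that Some by (cases t) (auto simp: moeb_def)
    hence "map (moeb 0 (-1) 1 (-x0)) [x, c] = map Some [cut_coord xs x, cut_coord xs c]"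
      using assms by auto
    moreover have "moeb 0 (-1) 1 (-x0) xs = None" using Some by (simp add: moeb_def)
    ultimately show ?thesis unfolding cyc_ordered_def using assms lt
      by (intro conjI exI[of _ 0] exI[of _ "-1"] exI[of _ 1] exI[of _ "-x0"]
          exI[of _ "[cut_coord xs x, cut_coord xs c]"]) auto
  qed
qed

definition cut_arc :: "real option \<Rightarrow> real option \<Rightarrow> real option \<Rightarrow> real option set" where
  "cut_arc xs u v = {t. t \<noteq> xs \<and> cut_coord xs u < cut_coord xs t \<and> cut_coord xs t < cut_coord xs v}"

lemma disjoint_family_cut_arcs:
  assumes "sorted_wrt (\<lambda>s t. cut_coord xs s < cut_coord xs t) pts"
  shows "disjoint_family_on (\<lambda>j. cut_arc xs (pts ! j) (pts ! Suc j)) {..<length pts - 1}"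
  unfolding disjoint_family_on_def
proof (intro ballI impI)
  have le: "cut_coord xs (pts ! Suc i) \<le> cut_coord xs (pts ! k)" if "i < k" "k < length pts" for i k
  proof (cases "Suc i = k")
    case False
    thus ?thesis using assms that by (simp add: sorted_wrt_iff_nth_less less_imp_le)
  qed simp
  fix i k assume "i \<in> {..<length pts - 1}" "k \<in> {..<length pts - 1}" "i \<noteq> k"
  thus "cut_arc xs (pts ! i) (pts ! Suc i) \<inter> cut_arc xs (pts ! k) (pts ! Suc k) = {}"
    using le[of i k] le[of k i] by (cases "i < k") (fastforce simp: cut_arc_def)+
qed

section \<open>Divisors\<close>

lemma sum_order_eq_degree:
  fixes p :: "complex poly"
  assumes "p \<noteq> 0" "finite V" "{w. poly p w = 0} \<subseteq> V"
  shows "(\<Sum>w\<in>V. order w p) = degree p"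
proof -
  have "(\<Sum>w\<in>V. order w p) = (\<Sum>w | poly p w = 0. order w p)"
    by (rule sum.mono_neutral_right[OF assms(2,3)]) (auto simp: order_0I)
  also have "\<dots> = (\<Sum>w\<in>set_mset (proots p). count (proots p) w)" using assms(1) by simp
  also have "\<dots> = size (proots p)" by (simp add: size_multiset_overloaded_eq)
  also have "\<dots> = degree p" by (rule size_proots_complex)
  finally show ?thesis .
qed

lemma order_num_den_eq_0: "order w (num F) = 0 \<or> order w (den F) = 0"
  by (metis num_den_no_common_root order_0I)

lemma zero_div_Some: "zero_div F (Some w) = (if rf_const F then 0 else int (order w (num F)))"
  and polar_div_Some: "polar_div F (Some w) = (if rf_const F then 0 else int (order w (den F)))"
  using order_num_den_eq_0[of w F]
  by (cases "order w (num F) = 0"; simp add: zero_div_def polar_div_def rf_ord_def)+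

lemma degree_num_den_rf_const:
  assumes "rf_const F" "F \<noteq> 0" shows "degree (num F) = 0" "degree (den F) = 0"
proof -
  obtain c where c: "F = Fract [:c:] 1" using assms(1) by (auto simp: rf_const_def)
  hence "c \<noteq> 0" using assms(2) by (auto simp: fract_collapse)
  hence "reduced_fract [:c:] 1" by (simp add: reduced_fract_def)
  hence "num F = [:c:] \<and> den F = 1" using c by (rule num_den_eqI)
  thus "degree (num F) = 0" "degree (den F) = 0" by simp_all
qed

definition zero_pole_set :: "ratfun \<Rightarrow> complex option set" where
  "zero_pole_set F = insert None (Some ` {w. poly (num F) w = 0 \<or> poly (den F) w = 0})"

lemma finite_zero_pole_set: "F \<noteq> 0 \<Longrightarrow> finite (zero_pole_set F)"
proof -
  assume "F \<noteq> 0"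
  hence "finite ({w. poly (num F) w = 0} \<union> {w. poly (den F) w = 0})"
    using poly_roots_finite[OF num_nonzero] poly_roots_finite[OF den_nonzero] by blast
  thus ?thesis by (simp add: zero_pole_set_def Collect_disj_eq)
qed

lemma zero_div_polar_div_outside:
  assumes "z \<notin> zero_pole_set F" shows "zero_div F z = 0" "polar_div F z = 0"
proof -
  obtain w where "z = Some w" "poly (num F) w \<noteq> 0" "poly (den F) w \<noteq> 0"
    using assms by (cases z) (auto simp: zero_pole_set_def)
  thus "zero_div F z = 0" "polar_div F z = 0" by (simp_all add: zero_div_Some polar_div_Some order_0I)
qed

lemma sum_zero_div_eq_sum_polar_div:
  assumes F0: "F \<noteq> 0" and fin: "finite W" and sub: "zero_pole_set F \<subseteq> W"
  shows "(\<Sum>z\<in>W. zero_div F z) = (\<Sum>z\<in>W. polar_div F z)"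
proof (cases "rf_const F")
  case True thus ?thesis by (simp add: zero_div_def polar_div_def)
next
  case False
  define V where "V = {w. poly (num F) w = 0 \<or> poly (den F) w = 0}"
  have V: "finite V" "zero_pole_set F = insert None (Some ` V)" "None \<notin> Some ` V"
    using finite_zero_pole_set[OF F0] by (auto simp: zero_pole_set_def V_def dest: finite_imageD)
  have sum_W: "(\<Sum>z\<in>W. f z) = f None + (\<Sum>w\<in>V. f (Some w))"
    if "\<And>z. z \<notin> zero_pole_set F \<Longrightarrow> f z = 0" for f :: "complex option \<Rightarrow> int"
  proof -
    have "(\<Sum>z\<in>W. f z) = (\<Sum>z\<in>zero_pole_set F. f z)"
      by (rule sum.mono_neutral_right[OF fin sub]) (use that in auto)
    thus ?thesis using V by (simp add: sum.reindex)
  qed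
  have "(\<Sum>w\<in>V. order w (num F)) = degree (num F)" "(\<Sum>w\<in>V. order w (den F)) = degree (den F)"
    by (rule sum_order_eq_degree[OF num_nonzero[OF F0] V(1)], force simp: V_def)
      (rule sum_order_eq_degree[OF den_nonzero V(1)], force simp: V_def)
  hence "(\<Sum>z\<in>W. zero_div F z) = zero_div F None + int (degree (num F))"
    and "(\<Sum>z\<in>W. polar_div F z) = polar_div F None + int (degree (den F))"
    using sum_W[of "zero_div F", OF zero_div_polar_div_outside(1)]
      sum_W[of "polar_div F", OF zero_div_polar_div_outside(2)] False
    by (simp_all add: zero_div_Some polar_div_Some flip: of_nat_sum)
  thus ?thesis using False by (simp add: zero_div_def polar_div_def rf_ord_def)
qed

definition generalized_zero_div :: "ratfun \<Rightarrow> divisor \<Rightarrow> divisor" where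
  "generalized_zero_div F D z = zero_div F z + D z - polar_div F z"

lemma generalized_zero_div_nonneg: "F \<in> Lspace D \<Longrightarrow> generalized_zero_div F D z \<ge> 0"
proof -
  assume "F \<in> Lspace D"
  hence "polar_div F z \<le> D z" by (simp add: Lspace_def)
  moreover have "zero_div F z \<ge> 0" by (simp add: zero_div_def)
  ultimately show ?thesis by (simp add: generalized_zero_div_def)
qed

lemma generalized_zero_div_outside:
  "z \<notin> zero_pole_set F \<Longrightarrow> D z = 0 \<Longrightarrow> generalized_zero_div F D z = 0"
  by (simp add: generalized_zero_div_def zero_div_polar_div_outside)

lemma sum_generalized_zero_div:
  assumes "F \<noteq> 0" "finite W" "zero_pole_set F \<subseteq> W" "{z. D z \<noteq> 0} \<subseteq> W"
  shows "(\<Sum>z\<in>W. generalized_zero_div F D z) = deg_div D"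
proof -
  have "(\<Sum>z\<in>W. D z) = deg_div D"
    unfolding deg_div_def using assms(2,4) by (intro sum.mono_neutral_right) auto
  moreover have "(\<Sum>z\<in>W. generalized_zero_div F D z) =
      (\<Sum>z\<in>W. zero_div F z) + (\<Sum>z\<in>W. D z) - (\<Sum>z\<in>W. polar_div F z)"
    by (simp add: generalized_zero_div_def sum.distrib sum_subtractf)
  ultimately show ?thesis using sum_zero_div_eq_sum_polar_div[OF assms(1-3)] by linarith
qed

lemma emb_simps [simp]: "emb None = None" "emb (Some x) = Some (complex_of_real x)"
  by (simp_all add: emb_def)

lemma inj_emb: "inj emb"
  by (rule injI) (auto simp: emb_def option.map_sel option.map_disc_iff intro: option.expand)

lemma sign_fun_eq_sum_cut_coord:
  assumes "x \<noteq> xs" "D (emb x) = 0"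
  shows "sign_fun D xs x =
    (\<Sum>c\<in>{c. D (emb c) \<noteq> 0 \<and> c \<noteq> xs}. if cut_coord xs x < cut_coord xs c then D (emb c) else 0)"
  unfolding sign_fun_def
proof (rule sum.cong [OF refl])
  fix c assume "c \<in> {c. D (emb c) \<noteq> 0 \<and> c \<noteq> xs}"
  hence "distinct [xs, x, c]" using assms by auto
  hence "x \<in> halfopen_arc xs c \<longleftrightarrow> cut_coord xs x < cut_coord xs c"
    using assms(1) by (simp add: halfopen_arc_def open_arc_def cyc_ordered_3_iff)
  thus "D (emb c) * (if x \<in> halfopen_arc xs c then 1 else 0) =
      (if cut_coord xs x < cut_coord xs c then D (emb c) else 0)" by simp
qed

lemma sign_fun_diff:
  assumes "u \<noteq> xs" "v \<noteq> xs" "D (emb u) = 0" "D (emb v) = 0"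
    and lt: "cut_coord xs u < cut_coord xs v" and fin: "finite {c. D (emb c) \<noteq> 0}"
  shows "sign_fun D xs u - sign_fun D xs v = (\<Sum>c | c \<in> cut_arc xs u v \<and> D (emb c) \<noteq> 0. D (emb c))"
proof -
  let ?C = "{c. D (emb c) \<noteq> 0 \<and> c \<noteq> xs}"
  have finC: "finite ?C" using fin by simp
  have "sign_fun D xs u - sign_fun D xs v = (\<Sum>c\<in>?C. if c \<in> cut_arc xs u v then D (emb c) else 0)"
    unfolding sign_fun_eq_sum_cut_coord[of u xs D, OF assms(1,3)]
      sign_fun_eq_sum_cut_coord[of v xs D, OF assms(2,4)] sum_subtractf [symmetric]
  proof (rule sum.cong [OF refl])
    fix c assume c: "c \<in> ?C"
    hence "cut_coord xs c \<noteq> cut_coord xs v" using cut_coord_inj[of c xs v] assms(2,4) by auto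
    thus "(if cut_coord xs u < cut_coord xs c then D (emb c) else 0) -
        (if cut_coord xs v < cut_coord xs c then D (emb c) else 0) =
        (if c \<in> cut_arc xs u v then D (emb c) else 0)"
      using c lt by (auto simp: cut_arc_def)
  qed
  also have "\<dots> = (\<Sum>c\<in>{c\<in>?C. c \<in> cut_arc xs u v}. D (emb c))"
    by (rule sum.inter_filter [OF finC, symmetric])
  also have "{c\<in>?C. c \<in> cut_arc xs u v} = {c. c \<in> cut_arc xs u v \<and> D (emb c) \<noteq> 0}"
    by (auto simp: cut_arc_def)
  finally show ?thesis .
qed

section \<open>Signs of real rational functions\<close>

locale real_ratfun =
  fixes F :: ratfun
  assumes nonzero: "F \<noteq> 0" and real: "rf_real F"
begin

definition P :: "real poly" where "P = map_poly Re (num F)"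
definition Q :: "real poly" where "Q = map_poly Re (den F)"

lemma num_eq: "num F = of_real_poly P"
  unfolding P_def using rf_real_coeffs(1)[OF real] by (rule of_real_poly_Re [symmetric])

lemma den_eq: "den F = of_real_poly Q"
  unfolding Q_def using rf_real_coeffs(2)[OF real] by (rule of_real_poly_Re [symmetric])

lemma P_nonzero: "P \<noteq> 0"
  using num_nonzero[OF nonzero] by (simp add: num_eq)

lemma Q_nonzero: "Q \<noteq> 0"
  using den_nonzero[of F] by (simp add: den_eq)

lemma lead_coeff_Q: "lead_coeff Q = 1"
  using lead_coeff_den[of F] by (simp add: den_eq coeff_map_poly)

lemma rf_eval_Some: "rf_eval F (Some (complex_of_real x)) =
    (if poly Q x = 0 then None else Some (complex_of_real (poly P x / poly Q x)))"
  by (simp add: rf_eval_def num_eq den_eq poly_of_real_poly)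

lemma rf_eval_None: "rf_eval F None = (if degree P > degree Q then None
    else if degree P < degree Q then Some 0 else Some (complex_of_real (lead_coeff P)))"
  using lead_coeff_Q by (auto simp: rf_eval_def num_eq den_eq coeff_map_poly)

definition real_zeros_poles :: "real set" where
  "real_zeros_poles = {r. poly P r = 0 \<or> poly Q r = 0}"

definition ord_support :: "real option set" where
  "ord_support = insert None (Some ` real_zeros_poles)"

lemma finite_real_zeros_poles: "finite real_zeros_poles"
  using poly_roots_finite[OF P_nonzero] poly_roots_finite[OF Q_nonzero]
  by (simp add: real_zeros_poles_def Collect_disj_eq)

lemma finite_ord_support: "finite ord_support"
  by (simp add: ord_support_def finite_real_zeros_poles)

text \<open>This is the absolute value of the order of F, since P and Q have no common real root.\<close>
definition abs_ord :: "real option \<Rightarrow> nat" where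
  "abs_ord t = (case t of Some x \<Rightarrow> order x P + order x Q
     | None \<Rightarrow> nat \<bar>int (degree Q) - int (degree P)\<bar>)"

lemma abs_ord_outside: "t \<notin> ord_support \<Longrightarrow> abs_ord t = 0"
  by (cases t) (auto simp: ord_support_def real_zeros_poles_def abs_ord_def inj_image_mem_iff order_0I)

lemma zero_div_add_polar_div: "zero_div F (emb t) + polar_div F (emb t) = int (abs_ord t)"
proof (cases "rf_const F")
  case True
  hence "degree P = 0" "degree Q = 0"
    using degree_num_den_rf_const[OF True nonzero] by (simp_all add: num_eq den_eq)
  hence "abs_ord t = 0"
    using order_degree[OF P_nonzero] order_degree[OF Q_nonzero] by (cases t) (auto simp: abs_ord_def)
  thus ?thesis using True by (simp add: zero_div_def polar_div_def)
next
  case False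
  show ?thesis
  proof (cases t)
    case (Some x)
    thus ?thesis using False order_num_den_eq_0[of "of_real x" F]
      by (auto simp: zero_div_Some polar_div_Some abs_ord_def num_eq den_eq order_of_real_poly
          P_nonzero Q_nonzero)
  qed (use False in \<open>simp add: zero_div_def polar_div_def rf_ord_def abs_ord_def num_eq den_eq\<close>)
qed

definition ord_mass :: "real set \<Rightarrow> nat" where
  "ord_mass A = (\<Sum>r\<in>{r\<in>real_zeros_poles. r \<in> A}. abs_ord (Some r))"

lemma ord_mass_Un: "A \<inter> B = {} \<Longrightarrow> ord_mass (A \<union> B) = ord_mass A + ord_mass B"
proof -
  assume "A \<inter> B = {}"
  moreover have "{r\<in>real_zeros_poles. r \<in> A \<union> B} =
      {r\<in>real_zeros_poles. r \<in> A} \<union> {r\<in>real_zeros_poles. r \<in> B}" by auto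
  ultimately show ?thesis
    using finite_real_zeros_poles by (simp add: ord_mass_def sum.union_disjoint disjoint_iff)
qed

lemma ord_mass_split: "ord_mass A = ord_mass {r\<in>A. c \<le> r} + ord_mass {r\<in>A. r < c}"
proof -
  have "A = {r\<in>A. c \<le> r} \<union> {r\<in>A. r < c}" "{r\<in>A. c \<le> r} \<inter> {r\<in>A. r < c} = {}" by auto
  thus ?thesis using ord_mass_Un by metis
qed

lemma sum_roots_eq_sum_real_zeros_poles:
  assumes "R = P \<or> R = Q"
  shows "(\<Sum>r | poly R r = 0 \<and> r \<in> A. order r R) = (\<Sum>r\<in>{r\<in>real_zeros_poles. r \<in> A}. order r R)"
  by (rule sum.mono_neutral_left) (use assms finite_real_zeros_poles P_nonzero Q_nonzero in
    \<open>auto simp: real_zeros_poles_def order_root\<close>)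

lemma ord_mass_eq: "ord_mass A =
    (\<Sum>r | poly P r = 0 \<and> r \<in> A. order r P) + (\<Sum>r | poly Q r = 0 \<and> r \<in> A. order r Q)"
  by (simp add: ord_mass_def abs_ord_def sum.distrib sum_roots_eq_sum_real_zeros_poles)

lemma sgn_eval_Some:
  assumes "poly P x \<noteq> 0" "poly Q x \<noteq> 0"
  shows "sgn (poly P x / poly Q x) = sgn (lead_coeff P) * (-1) ^ ord_mass {x<..}"
proof -
  have "sgn (poly P x / poly Q x) = sgn (poly P x) * sgn (poly Q x)"
    by (cases "poly Q x" "0::real" rule: linorder_cases) auto
  thus ?thesis using sgn_poly_eq_roots_above[OF P_nonzero assms(1)]
      sgn_poly_eq_roots_above[OF Q_nonzero assms(2)] lead_coeff_Q
    by (simp add: ord_mass_eq power_add)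
qed

text \<open>Nonreal zeros and poles of F come in conjugate pairs, so the total order of F on the
  extended real line is even.\<close>
lemma even_abs_ord_None_add_ord_mass: "even (abs_ord None + ord_mass UNIV)"
proof -
  have "even (abs_ord None) \<longleftrightarrow> even (degree P + degree Q)"
    by (cases "degree P \<le> degree Q") (auto simp: abs_ord_def nat_diff_distrib' nat_abs_int_diff)
  thus ?thesis using even_sum_real_root_orders[OF P_nonzero] even_sum_real_root_orders[OF Q_nonzero]
    by (simp add: ord_mass_eq)
qed

lemma eval_nonzero_Some:
  assumes "rf_eval F (emb (Some x)) = Some (complex_of_real s)" "s \<noteq> 0"
  shows "poly P x \<noteq> 0" "poly Q x \<noteq> 0" "s = poly P x / poly Q x"
  using assms by (auto simp: rf_eval_Some simp del: of_real_divide split: if_splits)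

lemma eval_nonzero_None:
  assumes "rf_eval F (emb None) = Some (complex_of_real s)" "s \<noteq> 0"
  shows "degree P = degree Q" "s = lead_coeff P"
  using assms by (auto simp: rf_eval_None split: if_splits)

lemma abs_ord_eval_nonzero:
  assumes "rf_eval F (emb t) = Some (complex_of_real s)" "s \<noteq> 0"
  shows "abs_ord t = 0"
proof (cases t)
  case None thus ?thesis using eval_nonzero_None assms by (simp add: abs_ord_def)
next
  case (Some x) thus ?thesis using eval_nonzero_Some assms by (simp add: abs_ord_def order_0I)
qed

definition count_after :: "real option \<Rightarrow> real option \<Rightarrow> nat" where
  "count_after xs t = (\<Sum>s\<in>{s\<in>ord_support. s \<noteq> xs \<and> cut_coord xs t < cut_coord xs s}. abs_ord s)"

lemma count_after_eq: "count_after xs t =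
    (if None \<noteq> xs \<and> cut_coord xs t < 0 then abs_ord None else 0) +
    ord_mass {r. Some r \<noteq> xs \<and> cut_coord xs t < cut_coord xs (Some r)}"
proof -
  let ?C = "\<lambda>s. s \<noteq> xs \<and> cut_coord xs t < cut_coord xs s"
  have "{s\<in>ord_support. ?C s} =
      (if ?C None then {None} else {}) \<union> Some ` {r\<in>real_zeros_poles. ?C (Some r)}"
    by (auto simp: ord_support_def)
  thus ?thesis using finite_real_zeros_poles by (simp add: count_after_def ord_mass_def sum.reindex)
qed

lemma count_after_cut_Some:
  shows "count_after (Some c) None = ord_mass {..<c}"
    and "x < c \<Longrightarrow> count_after (Some c) (Some x) = ord_mass {x<..<c}"
    and "c < x \<Longrightarrow> count_after (Some c) (Some x) = abs_ord None + ord_mass {x<..} + ord_mass {..<c}"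
proof -
  have "{r. r \<noteq> c \<and> r < c} = {..<c}" by auto
  thus "count_after (Some c) None = ord_mass {..<c}" by (simp add: count_after_eq zero_less_divide_iff)
next
  assume "x < c"
  hence "\<not> -1 / (x - c) < 0" "{r. r \<noteq> c \<and> 1 / (r - c) < 1 / (x - c)} = {x<..<c}"
    by (auto simp: divide_less_0_iff one_div_diff_less_iff split: if_splits)
  thus "count_after (Some c) (Some x) = ord_mass {x<..<c}" by (simp add: count_after_eq)
next
  assume "c < x"
  hence "-1 / (x - c) < 0" "{r. r \<noteq> c \<and> 1 / (r - c) < 1 / (x - c)} = {x<..} \<union> {..<c}"
    "{x<..} \<inter> {..<c} = {}"
    by (auto simp: divide_less_0_iff one_div_diff_less_iff split: if_splits)
  thus "count_after (Some c) (Some x) = abs_ord None + ord_mass {x<..} + ord_mass {..<c}"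
    by (simp add: count_after_eq ord_mass_Un)
qed

lemma sgn_eval_count_after_cut_Some:
  assumes "t \<noteq> Some c" "rf_eval F (emb t) = Some (complex_of_real s)" "s \<noteq> 0"
  shows "sgn s = sgn (lead_coeff P) * (-1) ^ ord_mass {c..} * (-1) ^ count_after (Some c) t"
proof -
  have parity: "(-1 :: real) ^ (abs_ord None + ord_mass {..<c}) = (-1) ^ ord_mass {c..}"
    using even_abs_ord_None_add_ord_mass ord_mass_split[of UNIV c]
    by (simp add: minus_one_power_iff atLeast_def lessThan_def)
  show ?thesis
  proof (cases t)
    case None
    hence "abs_ord None = 0" "sgn s = sgn (lead_coeff P)"
      using eval_nonzero_None assms(2,3) by (simp_all add: abs_ord_def)
    thus ?thesis using parity None by (simp add: count_after_cut_Some flip: power_add)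
  next
    case (Some x)
    hence "x \<noteq> c" using assms(1) by auto
    have sgn_s: "sgn s = sgn (lead_coeff P) * (-1) ^ ord_mass {x<..}"
      using Some eval_nonzero_Some[of x s] sgn_eval_Some assms(2,3) by simp
    consider "x < c" | "c < x" using \<open>x \<noteq> c\<close> by linarith
    thus ?thesis
    proof cases
      case 1
      have "{r\<in>{x<..}. c \<le> r} = {c..}" "{r\<in>{x<..}. r < c} = {x<..<c}" using 1 by auto
      thus ?thesis using 1 Some sgn_s ord_mass_split[of "{x<..}" c]
        by (simp add: count_after_cut_Some power_add)
    next
      case 2
      thus ?thesis using Some sgn_s parity by (simp add: count_after_cut_Some power_add)
    qed
  qed
qed

text \<open>Along the circle cut at xs, the sign of F changes exactly at the points of odd order.\<close>
lemma sgn_eval_count_after: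
  obtains \<kappa> :: real
  where "\<And>t s. t \<noteq> xs \<Longrightarrow> rf_eval F (emb t) = Some (complex_of_real s) \<Longrightarrow> s \<noteq> 0 \<Longrightarrow>
    sgn s = \<kappa> * (-1) ^ count_after xs t"
proof (cases xs)
  case None
  have "sgn s = sgn (lead_coeff P) * (-1) ^ count_after xs (Some x)"
    if "rf_eval F (emb (Some x)) = Some (complex_of_real s)" "s \<noteq> 0" for x s
    using None eval_nonzero_Some[OF that] sgn_eval_Some by (simp add: count_after_eq greaterThan_def)
  thus ?thesis using that None by (metis not_None_eq)
next
  case (Some c)
  thus ?thesis using that sgn_eval_count_after_cut_Some by (metis mult.assoc)
qed

lemma count_after_split:
  assumes "v \<noteq> xs" "cut_coord xs u < cut_coord xs v" "abs_ord v = 0"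
  shows "count_after xs u = (\<Sum>t\<in>{t\<in>ord_support. t \<in> cut_arc xs u v}. abs_ord t) + count_after xs v"
proof -
  define after where "after t = {s\<in>ord_support. s \<noteq> xs \<and> cut_coord xs t < cut_coord xs s}" for t
  have fin: "finite (after u)" using finite_ord_support by (simp add: after_def)
  have "count_after xs u = (\<Sum>s\<in>after u.
      (if s \<in> cut_arc xs u v then abs_ord s else 0) + (if s \<in> after v then abs_ord s else 0))"
    unfolding count_after_def after_def [symmetric]
  proof (rule sum.cong [OF refl])
    fix s assume s: "s \<in> after u"
    have "s = v" if "cut_coord xs s = cut_coord xs v"
      using cut_coord_inj that s assms(1) by (auto simp: after_def)
    thus "abs_ord s = (if s \<in> cut_arc xs u v then abs_ord s else 0) + (if s \<in> after v then abs_ord s else 0)"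
      using s assms(3) by (cases "cut_coord xs s" "cut_coord xs v" rule: linorder_cases)
        (auto simp: after_def cut_arc_def)
  qed
  moreover have "{s\<in>after u. s \<in> cut_arc xs u v} = {t\<in>ord_support. t \<in> cut_arc xs u v}"
    and "{s\<in>after u. s \<in> after v} = after v"
    using assms(2) by (auto simp: after_def cut_arc_def)
  ultimately show ?thesis
    using sum.inter_filter[OF fin, where P = "\<lambda>s. s \<in> cut_arc xs u v" and g = abs_ord]
      sum.inter_filter[OF fin, where P = "\<lambda>s. s \<in> after v" and g = abs_ord]
    by (simp add: sum.distrib count_after_def after_def [symmetric])
qed

lemma sgn_eval_mult_eq_arc:
  assumes "u \<noteq> xs" "v \<noteq> xs" and lt: "cut_coord xs u < cut_coord xs v"
    and eu: "rf_eval F (emb u) = Some (complex_of_real su)" "su \<noteq> 0"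
    and ev: "rf_eval F (emb v) = Some (complex_of_real sv)" "sv \<noteq> 0"
  shows "sgn su * sgn sv = (-1) ^ (\<Sum>t\<in>{t\<in>ord_support. t \<in> cut_arc xs u v}. abs_ord t)"
proof -
  obtain \<kappa> where \<kappa>: "\<And>t s. t \<noteq> xs \<Longrightarrow> rf_eval F (emb t) = Some (complex_of_real s) \<Longrightarrow> s \<noteq> 0 \<Longrightarrow>
      sgn s = \<kappa> * (-1) ^ count_after xs t"
    using sgn_eval_count_after by blast
  have sv: "sgn sv = \<kappa> * (-1) ^ count_after xs v" using \<kappa> assms(2) ev .
  moreover have "(-1 :: real) ^ k * (-1) ^ k = 1" for k by (simp flip: power_mult_distrib)
  moreover have "sgn sv * sgn sv = 1" using ev(2) by (simp add: sgn_if)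
  ultimately have "\<kappa> * \<kappa> = 1" by (metis mult.assoc mult.commute mult_1_right)
  moreover have "sgn su = \<kappa> * (-1) ^ count_after xs u" using \<kappa> assms(1) eu .
  ultimately show ?thesis
    using sv count_after_split[OF assms(2) lt abs_ord_eval_nonzero[OF ev]]
    by (simp add: power_add algebra_simps flip: power_mult_distrib)
qed

lemma sum_abs_ord_arc_eq_sum_divisor:
  assumes L: "F \<in> Lspace D" and fin: "finite {c. D (emb c) \<noteq> 0}"
    and arc: "\<And>t. t \<in> A \<Longrightarrow> generalized_zero_div F D (emb t) = 0"
  shows "int (\<Sum>t\<in>{t\<in>ord_support. t \<in> A}. abs_ord t) =
    (\<Sum>c | c \<in> A \<and> D (emb c) \<noteq> 0. D (emb c))"
proof -
  have ord_eq: "int (abs_ord t) = D (emb t)" if "t \<in> A" for t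
  proof -
    have "zero_div F (emb t) \<ge> 0" "polar_div F (emb t) \<le> D (emb t)"
      using L by (simp_all add: zero_div_def Lspace_def)
    thus ?thesis using arc[OF that] zero_div_add_polar_div[of t] by (simp add: generalized_zero_div_def)
  qed
  define B where "B = {t \<in> A. t \<in> ord_support \<or> D (emb t) \<noteq> 0}"
  have finB: "finite B"
    using finite_ord_support fin by (simp add: B_def Collect_disj_eq conj_disj_distribL)
  have "int (\<Sum>t\<in>{t\<in>ord_support. t \<in> A}. abs_ord t) = (\<Sum>t\<in>B. int (abs_ord t))"
    unfolding of_nat_sum
  proof (rule sum.mono_neutral_left [OF finB])
    show "\<forall>t\<in>B - {t\<in>ord_support. t \<in> A}. int (abs_ord t) = 0"
    proof
      fix t assume "t \<in> B - {t\<in>ord_support. t \<in> A}"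
      hence "t \<notin> ord_support" by (auto simp: B_def)
      thus "int (abs_ord t) = 0" by (simp add: abs_ord_outside)
    qed
  qed (auto simp: B_def)
  also have "\<dots> = (\<Sum>t\<in>B. D (emb t))" by (rule sum.cong) (auto simp: B_def ord_eq)
  also have "\<dots> = (\<Sum>c | c \<in> A \<and> D (emb c) \<noteq> 0. D (emb c))"
    by (rule sum.mono_neutral_right [OF finB]) (auto simp: B_def)
  finally show ?thesis .
qed

lemma sgn_eval_mult_eq_sign_fun_diff:
  assumes L: "F \<in> Lspace D" and fin: "finite {z. D z \<noteq> 0}"
    and uv: "u \<noteq> xs" "v \<noteq> xs" "D (emb u) = 0" "D (emb v) = 0"
    and lt: "cut_coord xs u < cut_coord xs v"
    and eu: "rf_eval F (emb u) = Some (complex_of_real su)" "su \<noteq> 0"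
    and ev: "rf_eval F (emb v) = Some (complex_of_real sv)" "sv \<noteq> 0"
    and arc: "\<And>t. t \<in> cut_arc xs u v \<Longrightarrow> generalized_zero_div F D (emb t) = 0"
  shows "sgn su * sgn sv = (-1) powi (sign_fun D xs u - sign_fun D xs v)"
proof -
  have "finite {c. D (emb c) \<noteq> 0}"
    using finite_vimageI[OF fin inj_emb] by (simp add: vimage_def)
  thus ?thesis
    using sgn_eval_mult_eq_arc[OF uv(1,2) lt eu ev] sign_fun_diff[OF uv lt]
      sum_abs_ord_arc_eq_sum_divisor[OF L _ arc]
    by (simp flip: power_int_of_nat)
qed

end

section \<open>Alternation sets\<close>

lemma card_add_le_sum_disjoint_witnesses:
  fixes f :: "'a \<Rightarrow> int"
  assumes "finite W" "\<And>z. z \<notin> W \<Longrightarrow> f z = 0" "\<And>z. f z \<ge> 0"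
    and "finite I" "disjoint_family_on A I" "\<And>i. i \<in> I \<Longrightarrow> \<exists>z\<in>A i. f z \<noteq> 0"
    and "\<And>i. i \<in> I \<Longrightarrow> z0 \<notin> A i"
  shows "int (card I) + f z0 \<le> sum f W"
proof -
  obtain g where g: "\<And>i. i \<in> I \<Longrightarrow> g i \<in> A i \<and> f (g i) \<noteq> 0" using assms(6) by metis
  have inj: "inj_on g I"
    using g assms(5) unfolding disjoint_family_on_def by (intro inj_onI) (metis disjoint_iff)
  have z0: "z0 \<notin> g ` I" using g assms(7) by force
  have "g ` I \<subseteq> W" using g assms(2) by auto
  have "1 \<le> f (g i)" if "i \<in> I" for i using g[OF that] assms(3)[of "g i"] by linarith
  hence "(\<Sum>i\<in>I. 1) \<le> (\<Sum>i\<in>I. f (g i))" by (rule sum_mono)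
  hence "int (card I) \<le> (\<Sum>i\<in>I. f (g i))" by simp
  also have "\<dots> = sum f (g ` I)" by (simp add: sum.reindex [OF inj])
  finally have "int (card I) + f z0 \<le> sum f (insert z0 (g ` I))"
    using z0 assms(1,4) \<open>g ` I \<subseteq> W\<close> by (simp add: finite_subset)
  also have "\<dots> \<le> sum f (insert z0 W)"
    using \<open>g ` I \<subseteq> W\<close> assms(1,3) by (intro sum_mono2) auto
  also have "\<dots> = sum f W" using assms(1,2) by (cases "z0 \<in> W") (simp_all add: insert_absorb)
  finally show ?thesis .
qed

lemma divisor_emb_eq_0:
  "\<forall>z. D z \<noteq> 0 \<longrightarrow> (\<exists>x. z = emb x \<and> x \<notin> E) \<Longrightarrow> t \<in> E \<Longrightarrow> D (emb t) = 0"
  using inj_emb by (auto dest: injD)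

context real_ratfun
begin

text \<open>If the generalized zero divisor vanished on the arc, the sign of F would change across it
  with the parity of the jump of the sign function, whereas alternation prescribes the opposite
  parity.\<close>
lemma alternation_arc_meets_generalized_zero_div:
  assumes alt: "alternation_set E D xs F pts"
    and supp: "\<forall>z. D z \<noteq> 0 \<longrightarrow> (\<exists>x. z = emb x \<and> x \<notin> E)"
    and fin: "finite {z. D z \<noteq> 0}" and L: "F \<in> Lspace D" and xs: "xs \<notin> E" and j: "Suc j < length pts"
  shows "\<exists>t\<in>cut_arc xs (pts ! j) (pts ! Suc j). generalized_zero_div F D (emb t) \<noteq> 0"
proof (rule ccontr)
  assume arc: "\<not> ?thesis"
  define u v where "u = pts ! j" and "v = pts ! Suc j"
  define m where "m = int (length pts)"
  define su sv
    where "su = (-1 :: real) powi (m - int (j + 1) - sign_fun D xs u)"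
      and "sv = (-1 :: real) powi (m - int (Suc j + 1) - sign_fun D xs v)"
  have "u \<in> E" "v \<in> E" using alt j by (auto simp: alternation_set_def u_def v_def)
  hence uv: "u \<noteq> xs" "v \<noteq> xs" "D (emb u) = 0" "D (emb v) = 0"
    using xs divisor_emb_eq_0[OF supp] by auto
  have "cut_coord xs u < cut_coord xs v"
    using cyc_ordered_imp_sorted(2)[of xs pts] alt j
    by (auto simp: alternation_set_def sorted_wrt_iff_nth_less u_def v_def)
  moreover have "rf_eval F (emb u) = Some (complex_of_real su)"
    and "rf_eval F (emb v) = Some (complex_of_real sv)"
    using alt j by (auto simp: alternation_set_def u_def v_def su_def sv_def m_def)
  moreover have "su \<noteq> 0" "sv \<noteq> 0" by (simp_all add: su_def sv_def power_int_minus_left)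
  ultimately have "sgn su * sgn sv = (-1) powi (sign_fun D xs u - sign_fun D xs v)"
    using sgn_eval_mult_eq_sign_fun_diff[OF L fin uv] arc by (auto simp: u_def v_def)
  thus False
    unfolding su_def sv_def power_int_minus_left by (auto split: if_splits)
qed

end

theorem theorem2p4:
  fixes E :: "real option set" and n :: nat and Dinf :: divisor and xstar :: "real option"
    and F :: ratfun and pts :: "real option list"
  assumes E_compact: "compact_ext E"
    and E_proper: "E \<noteq> UNIV"
    and E_infinite: "infinite E"
    and n_pos: "n \<ge> 1"
    and D_nonneg: "\<forall>z. Dinf z \<ge> 0"
    and D_fin: "finite {z. Dinf z \<noteq> 0}"
    and D_deg: "deg_div Dinf = int n"
    and D_supp: "\<forall>z. Dinf z \<noteq> 0 \<longrightarrow> (\<exists>x. z = emb x \<and> x \<notin> E)"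
    and xstar: "xstar \<notin> E"
    and F_L: "F \<in> Lspace Dinf"
    and F_real: "rf_real F"
    and F_norm: "\<forall>x\<in>E. (case rf_eval F (emb x) of None \<Rightarrow> False | Some v \<Rightarrow> cmod v \<le> 1)"
    and F_nz: "F \<noteq> 0"
    and alt: "alternation_set E Dinf xstar F pts"
  shows "int (length pts) \<le> int n + 1 - (zero_div F (emb xstar) + Dinf (emb xstar) - polar_div F (emb xstar))"
proof -
  interpret real_ratfun F using F_nz F_real by unfold_locales
  define D0 where "D0 = generalized_zero_div F Dinf"
  define W where "W = zero_pole_set F \<union> {z. Dinf z \<noteq> 0}"
  define I where "I = {..<length pts - 1}"
  define A where "A j = emb ` cut_arc xstar (pts ! j) (pts ! Suc j)" for j
  have "sorted_wrt (\<lambda>s t. cut_coord xstar s < cut_coord xstar t) pts"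
    using alt cyc_ordered_imp_sorted(2) by (simp add: alternation_set_def)
  hence "disjoint_family_on A I"
    using disjoint_family_cut_arcs unfolding A_def I_def disjoint_family_on_def
    by (metis image_Int [OF inj_emb] image_empty)
  moreover have "\<exists>z\<in>A j. D0 z \<noteq> 0" if "j \<in> I" for j
    using alternation_arc_meets_generalized_zero_div[OF alt D_supp D_fin F_L xstar] that
    by (auto simp: A_def I_def D0_def)
  moreover have "emb xstar \<notin> A j" for j by (auto simp: A_def cut_arc_def dest: injD [OF inj_emb])
  ultimately have "int (card I) + D0 (emb xstar) \<le> sum D0 W"
    using finite_zero_pole_set[OF F_nz] D_fin generalized_zero_div_nonneg[OF F_L]
    by (intro card_add_le_sum_disjoint_witnesses)
      (auto simp: W_def D0_def I_def generalized_zero_div_outside)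
  also have "sum D0 W = int n"
    using sum_generalized_zero_div[OF F_nz] finite_zero_pole_set[OF F_nz] D_fin D_deg
    by (simp add: D0_def W_def)
  finally show ?thesis by (simp add: I_def D0_def generalized_zero_div_def)
qed

end
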